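(* Let $m\le n$, $K\in\{0,\ldots,m-1\}$, $\gamma>0$, $\mathcal{C}\subset\mathrm{dom} f\subset\mathbb{R}^{m\times n}$, and consider $$\min_{X\in\mathbb{R}^{m\times n}}\ f(X)+\gamma\mathcal{T}_K(X)+\delta_{\mathcal C}(X),$$ where $f+\delta_{\mathcal C}$ is directionally differentiable. Let $X^*$ be a d-stationary point. Suppose: (C1) every $X\in\mathcal C$ has a singular value decomposition $X=U[\mathrm{diag}(\sigma_1(X),\ldots,\sigma_m(X)),0]V^\top$ ($U,V$ orthogonal) such that $-U[\mathrm{diag}(0,\ldots,0,\sigma_{K+1}(X),\ldots,\sigma_m(X)),0]V^\top\in\mathcal{F}(X;\mathcal C)$; (C2) there is $\Gamma$ with $(f+\delta_{\mathcal C})'(X^*;D)\le\Gamma$ for all $D\in\mathcal{F}(X^*;\mathcal C)$ with $\|D\|_*=1$. If $\gamma>\Gamma$, then $\mathcal{T}_K(X^* )=0$, i.e., $\mathrm{rank}(X^* )\le K$.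
   Context: Truncated nuclear norm: $\mathcal{T}_K(X)=\sum_{i=K+1}^{\min\{m,n\}}\sigma_i(X)$, where $\sigma_i(X)$ is the $i$-th largest singular value. $\|D\|_*$ is the nuclear norm (sum of singular values). $\delta_{\mathcal C}$ is the indicator of $\mathcal C$; $\mathrm{dom} f=\{X\mid f(X)<\infty\}$. Feasible cone $\mathcal{F}(X;\mathcal{C})=\{D\mid \exists\varsigma'>0:\ X+\varsigma D\in\mathcal{C}\ \forall\varsigma\in(0,\varsigma')\}$ for $X\in\mathcal C$. Directional derivative $h'(X;D)=\lim_{\varsigma\searrow0}(h(X+\varsigma D)-h(X))/\varsigma$, assumed to exist in $\mathbb{R}$ for feasible directions. $X^*$ is d-stationary if the objective's directional derivative at $X^*$ is $\ge0$ for all $D\in\mathcal{F}(X^*;\mathcal C)$. *)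

theory Defs
  imports "HOL-Analysis.Analysis" "Jordan_Normal_Form.DL_Rank"
begin

(* Real m x n matrices are JNF matrices "real mat" in carrier_mat m n. *)

definition orthogonal_mat :: "nat \<Rightarrow> real mat \<Rightarrow> bool" where
  "orthogonal_mat k U \<longleftrightarrow> U \<in> carrier_mat k k \<and> U * transpose_mat U = 1\<^sub>m k"

definition rect_diag :: "nat \<Rightarrow> nat \<Rightarrow> (nat \<Rightarrow> real) \<Rightarrow> real mat" where
  "rect_diag m n s = mat m n (\<lambda>(i,j). if i = j then s i else 0)"

definition is_svd :: "real mat \<Rightarrow> (nat \<Rightarrow> real) \<Rightarrow> real mat \<Rightarrow> real mat \<Rightarrow> bool" where
  "is_svd X s U V \<longleftrightarrow>
     orthogonal_mat (dim_row X) U \<and> orthogonal_mat (dim_col X) V \<and>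
     X = U * rect_diag (dim_row X) (dim_col X) s * transpose_mat V"

definition sv_seq :: "nat \<Rightarrow> (nat \<Rightarrow> real) \<Rightarrow> bool" where
  "sv_seq m s \<longleftrightarrow> (\<forall>i<m. 0 \<le> s i) \<and> (\<forall>i j. i \<le> j \<and> j < m \<longrightarrow> s j \<le> s i)
                   \<and> (\<forall>i\<ge>m. s i = 0)"

(* sigma X i = the (i+1)-th largest singular value of X *)
definition sigma :: "real mat \<Rightarrow> nat \<Rightarrow> real" where
  "sigma X = (THE s. sv_seq (dim_row X) s \<and> (\<exists>U V. is_svd X s U V))"

(* truncated nuclear norm T_K(X) = sum_{i=K+1}^{m} sigma_i(X)  (m = number of rows <= n) *)
definition trunc_nuc :: "nat \<Rightarrow> real mat \<Rightarrow> real" where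
  "trunc_nuc K X = (\<Sum>i\<in>{K..<dim_row X}. sigma X i)"

definition nuc_norm :: "real mat \<Rightarrow> real" where
  "nuc_norm X = (\<Sum>i<dim_row X. sigma X i)"

definition feas_cone :: "nat \<Rightarrow> nat \<Rightarrow> real mat set \<Rightarrow> real mat \<Rightarrow> real mat set" where
  "feas_cone m n C X = {D \<in> carrier_mat m n.
      \<exists>e>0. \<forall>t. 0 < t \<and> t < e \<longrightarrow> X + t \<cdot>\<^sub>m D \<in> C}"

definition has_dir_deriv :: "(real mat \<Rightarrow> real) \<Rightarrow> real mat \<Rightarrow> real mat \<Rightarrow> real \<Rightarrow> bool" where
  "has_dir_deriv h X D d \<longleftrightarrow> ((\<lambda>t. (h (X + t \<cdot>\<^sub>m D) - h X) / t) \<longlongrightarrow> d) (at_right 0)"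

end

theory Submission
  imports Defs "HOL-Combinatorics.Permutations" "Jordan_Normal_Form.Char_Poly"
begin

text \<open>
  Suppose \<open>T = \<T>\<^sub>K(X\<^sup>*) > 0\<close>. With the SVD \<open>X\<^sup>* = U [diag \<sigma>, 0] V\<^sup>T\<close> from (C1), the direction
  \<open>D = -(1/T) U [diag(0,\<dots>,0,\<sigma>\<^bsub>K+1\<^esub>,\<dots>,\<sigma>\<^sub>m), 0] V\<^sup>T\<close> is feasible and has nuclear norm 1.
  The matrix \<open>X\<^sup>* + tD\<close> has the same singular vectors as \<open>X\<^sup>*\<close>, and its singular values arise
  by scaling the tail \<open>\<sigma>\<^bsub>K+1\<^esub>,\<dots>,\<sigma>\<^sub>m\<close> by \<open>1 - t/T\<close>, which keeps them sorted; hence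
  \<open>\<T>\<^sub>K(X\<^sup>* + tD) = T - t\<close> for \<open>0 \<le> t \<le> T\<close>. The objective then has directional derivative
  \<open>f'(X\<^sup>*;D) - \<gamma> \<le> \<Gamma> - \<gamma> < 0\<close> along \<open>D\<close>, contradicting d-stationarity. Once \<open>T = 0\<close>,
  \<open>X\<^sup>*\<close> is a sum of \<open>K\<close> rank-one matrices.

  Reading singular values off a particular SVD needs their uniqueness: the squared diagonal of any
  SVD of \<open>X\<close> is the multiset of roots of the characteristic polynomial of \<open>X X\<^sup>T\<close>.
\<close>

lemma rect_diag_dims [simp]: "dim_row (rect_diag m n s) = m" "dim_col (rect_diag m n s) = n"
  by (simp_all add: rect_diag_def)

definition svd_sum :: "nat \<Rightarrow> nat \<Rightarrow> real mat \<Rightarrow> (nat \<Rightarrow> real) \<Rightarrow> real mat \<Rightarrow> real mat" where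
  "svd_sum m n U s V = mat m n (\<lambda>(i,j). \<Sum>k<m. U$$(i,k) * s k * V$$(j,k))"

lemma svd_sum_carrier [simp]: "svd_sum m n U s V \<in> carrier_mat m n"
  by (simp add: svd_sum_def)

lemma svd_sum_dims [simp]: "dim_row (svd_sum m n U s V) = m" "dim_col (svd_sum m n U s V) = n"
  by (simp_all add: svd_sum_def)

lemma svd_sum_cong: "(\<And>k. k < m \<Longrightarrow> s k = t k) \<Longrightarrow> svd_sum m n U s V = svd_sum m n U t V"
  unfolding svd_sum_def by (intro eq_matI) auto

lemma svd_sum_add: "svd_sum m n U s V + svd_sum m n U t V = svd_sum m n U (\<lambda>k. s k + t k) V"
  unfolding svd_sum_def by (rule eq_matI) (auto simp: algebra_simps sum.distrib)

lemma svd_sum_smult: "c \<cdot>\<^sub>m svd_sum m n U s V = svd_sum m n U (\<lambda>k. c * s k) V"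
  unfolding svd_sum_def by (rule eq_matI) (auto simp: algebra_simps sum_distrib_left)

lemma svd_sum_uminus: "- svd_sum m n U s V = svd_sum m n U (\<lambda>k. - s k) V"
  unfolding svd_sum_def by (rule eq_matI) (auto simp: sum_negf[symmetric])

lemma mult_rect_diag_transpose_eq_svd_sum:
  assumes U: "U \<in> carrier_mat m m" and V: "V \<in> carrier_mat n n" and mn: "m \<le> n"
  shows "U * rect_diag m n s * transpose_mat V = svd_sum m n U s V"
proof (rule eq_matI)
  fix i j assume "i < dim_row (svd_sum m n U s V)" "j < dim_col (svd_sum m n U s V)"
  then have i: "i < m" and j: "j < n" by (auto simp: svd_sum_def)
  have UR: "(U * rect_diag m n s) $$ (i,l) = (if l < m then U$$(i,l) * s l else 0)" if "l < n" for l
  proof -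
    have "(U * rect_diag m n s) $$ (i,l) = (\<Sum>k<m. U$$(i,k) * (if k = l then s k else 0))"
      using U i that by (simp add: rect_diag_def scalar_prod_def atLeast0LessThan)
    also have "\<dots> = (if l < m then U$$(i,l) * s l else 0)"
      by (simp add: if_distrib[of "\<lambda>x. _ * x"] sum.delta' cong: if_cong)
    finally show ?thesis .
  qed
  have "(U * rect_diag m n s * transpose_mat V) $$ (i,j) = (\<Sum>l<n. (U * rect_diag m n s) $$ (i,l) * V $$ (j,l))"
    using U V i j by (auto simp: scalar_prod_def atLeast0LessThan intro!: sum.cong)
  also have "\<dots> = (\<Sum>l<n. if l < m then U$$(i,l) * s l * V $$ (j,l) else 0)"
    by (rule sum.cong) (simp_all add: UR)
  also have "\<dots> = (\<Sum>l<m. U$$(i,l) * s l * V $$ (j,l))"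
    using mn by (simp add: sum.If_cases lessThan_def) (rule sum.cong; auto)
  finally show "(U * rect_diag m n s * transpose_mat V) $$ (i,j) = svd_sum m n U s V $$ (i,j)"
    using i j by (simp add: svd_sum_def)
qed (use assms in \<open>auto simp: svd_sum_def\<close>)

lemma orthogonal_mat_iff:
  "orthogonal_mat k U \<longleftrightarrow> U \<in> carrier_mat k k \<and>
     (\<forall>i<k. \<forall>j<k. (\<Sum>l<k. U$$(i,l) * U$$(j,l)) = (if i = j then 1 else 0))"
proof (cases "U \<in> carrier_mat k k")
  case True
  have "(U * transpose_mat U) $$ (i,j) = (\<Sum>l<k. U$$(i,l) * U$$(j,l))" if "i < k" "j < k" for i j
    using True that by (auto simp: scalar_prod_def atLeast0LessThan intro!: sum.cong)
  then show ?thesis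
    using True unfolding orthogonal_mat_def by (auto simp: eq_matI[of "U * transpose_mat U"] mat_eq_iff)
qed (simp add: orthogonal_mat_def)

lemma is_svd_iff:
  assumes X: "X \<in> carrier_mat m n" and mn: "m \<le> n"
  shows "is_svd X s U V \<longleftrightarrow> orthogonal_mat m U \<and> orthogonal_mat n V \<and> X = svd_sum m n U s V"
  using X mult_rect_diag_transpose_eq_svd_sum[OF _ _ mn]
  unfolding is_svd_def orthogonal_mat_def by auto

lemma orthogonal_mat_permute_cols:
  assumes U: "orthogonal_mat k U" and p: "p permutes {..<k}" and g: "\<And>l. g l * g l = 1"
  shows "orthogonal_mat k (mat k k (\<lambda>(i,l). U$$(i, p l) * g l))"
proof -
  have bp: "bij_betw p {..<k} {..<k}" using p by (rule permutes_imp_bij)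
  have "(\<Sum>l<k. U$$(i, p l) * g l * (U$$(j, p l) * g l)) = (\<Sum>l<k. U$$(i, l) * U$$(j, l))" for i j
    using sum.reindex_bij_betw[OF bp, of "\<lambda>l. U$$(i, l) * U$$(j, l)"]
    by (simp add: g mult.assoc mult.left_commute[of "g _"])
  then show ?thesis using U unfolding orthogonal_mat_iff by simp
qed

lemma svd_sum_permute:
  assumes mn: "m \<le> n" and p: "p permutes {..<m}" and g: "\<And>l. g l * g l = 1"
  shows "svd_sum m n (mat m m (\<lambda>(i,l). U$$(i, p l) * g l)) (\<lambda>l. s (p l) * g l) (mat n n (\<lambda>(j,l). V$$(j, p l)))
         = svd_sum m n U s V"
proof -
  have bp: "bij_betw p {..<m} {..<m}" using p by (rule permutes_imp_bij)
  have "(\<Sum>l<m. U$$(i, p l) * g l * (s (p l) * g l) * V$$(j, p l)) = (\<Sum>k<m. U$$(i,k) * s k * V$$(j,k))"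
    for i j
    using sum.reindex_bij_betw[OF bp, of "\<lambda>k. U$$(i,k) * s k * V$$(j,k)"]
    by (simp add: g mult.assoc mult.left_commute[of "g _"])
  then show ?thesis using mn unfolding svd_sum_def by (intro eq_matI) auto
qed

lemma permutation_sorting_desc:
  fixes a :: "nat \<Rightarrow> 'a::linorder"
  obtains p where "p permutes {..<m}" "\<And>i j. i \<le> j \<Longrightarrow> j < m \<Longrightarrow> a (p j) \<le> a (p i)"
proof -
  define xs where "xs = map a [0..<m]"
  have "mset (rev (sort xs)) = mset xs" by simp
  then obtain p where p: "p permutes {..<length xs}" and pl: "permute_list p xs = rev (sort xs)"
    by (rule mset_eq_permutation)
  have lx: "length xs = m" unfolding xs_def by simp
  have pk: "p k < m" if "k < m" for k using p that lx by (meson lessThan_iff permutes_in_image)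
  have ap: "a (p k) = sort xs ! (m - Suc k)" if "k < m" for k
  proof -
    have "a (p k) = permute_list p xs ! k" using that pk[OF that] lx by (simp add: permute_list_def xs_def)
    then show ?thesis using pl that lx by (simp add: rev_nth)
  qed
  show ?thesis
  proof
    show "p permutes {..<m}" using p lx by simp
    fix i j :: nat assume "i \<le> j" "j < m"
    then show "a (p j) \<le> a (p i)" using ap lx by (simp add: sorted_nth_mono)
  qed
qed

lemma is_svd_sorted_exists:
  assumes X: "X \<in> carrier_mat m n" and mn: "m \<le> n" and svd: "is_svd X s U V"
  obtains s' U' V' where "sv_seq m s'" "is_svd X s' U' V'"
    "mset (map s' [0..<m]) = mset (map (\<lambda>i. \<bar>s i\<bar>) [0..<m])"
proof -
  have U: "orthogonal_mat m U" and V: "orthogonal_mat n V" and XU: "X = svd_sum m n U s V"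
    using svd is_svd_iff[OF X mn] by auto
  obtain p where p: "p permutes {..<m}" and desc: "\<And>i j. i \<le> j \<Longrightarrow> j < m \<Longrightarrow> \<bar>s (p j)\<bar> \<le> \<bar>s (p i)\<bar>"
    using permutation_sorting_desc[of m "\<lambda>i. \<bar>s i\<bar>"] by blast
  have pn: "p permutes {..<n}" using permutes_subset[OF p] mn by auto
  \<comment> \<open>flip the sign of each column of \<open>U\<close> that carries a negative diagonal entry\<close>
  define g where "g l = (if s (p l) < 0 then -1 else (1::real))" for l
  have g: "g l * g l = 1" for l unfolding g_def by auto
  define U' where "U' = mat m m (\<lambda>(i,l). U$$(i, p l) * g l)"
  define V' where "V' = mat n n (\<lambda>(j,l). V$$(j, p l))"
  define s' where "s' k = (if k < m then \<bar>s (p k)\<bar> else 0)" for k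
  have "svd_sum m n U' s' V' = svd_sum m n U' (\<lambda>l. s (p l) * g l) V'"
    by (rule svd_sum_cong) (simp add: s'_def g_def)
  also have "\<dots> = X" unfolding U'_def V'_def XU by (rule svd_sum_permute[OF mn p g])
  finally have "is_svd X s' U' V'"
    using is_svd_iff[OF X mn] orthogonal_mat_permute_cols[OF U p g]
      orthogonal_mat_permute_cols[OF V pn, of "\<lambda>_. 1"] unfolding U'_def V'_def by simp
  moreover have "sv_seq m s'" unfolding sv_seq_def s'_def using desc by auto
  moreover have "mset (map s' [0..<m]) = mset (map (\<lambda>i. \<bar>s i\<bar>) [0..<m])"
  proof -
    have "p k < m" if "k < m" for k using p that by (meson lessThan_iff permutes_in_image)
    then have "map s' [0..<m] = permute_list p (map (\<lambda>i. \<bar>s i\<bar>) [0..<m])"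
      by (intro nth_equalityI) (auto simp: permute_list_def s'_def)
    then show ?thesis using mset_permute_list[of p "map (\<lambda>i. \<bar>s i\<bar>) [0..<m]"] p by simp
  qed
  ultimately show ?thesis using that by blast
qed

lemma rect_diag_mult_transpose:
  assumes mn: "m \<le> n"
  shows "rect_diag m n s * transpose_mat (rect_diag m n s) = mat m m (\<lambda>(i,j). if i = j then s i ^ 2 else 0)"
proof (rule eq_matI)
  fix i j assume "i < dim_row (mat m m (\<lambda>(i,j). if i = j then s i ^ 2 else 0))"
    "j < dim_col (mat m m (\<lambda>(i,j). if i = j then s i ^ 2 else 0))"
  then have ij: "i < m" "j < m" by auto
  have "(rect_diag m n s * transpose_mat (rect_diag m n s)) $$ (i,j)
      = (\<Sum>l<n. (if i = l then s i else 0) * (if j = l then s j else 0))"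
    using ij mn by (auto simp: scalar_prod_def atLeast0LessThan rect_diag_def intro!: sum.cong)
  also have "\<dots> = (if i = j then s i ^ 2 else 0)"
    using ij mn by (auto simp: if_distrib[of "\<lambda>x. _ * x"] power2_eq_square cong: if_cong)
  finally show "(rect_diag m n s * transpose_mat (rect_diag m n s)) $$ (i,j)
      = mat m m (\<lambda>(i,j). if i = j then s i ^ 2 else 0) $$ (i,j)"
    using ij by simp
qed auto

lemma svd_mult_transpose:
  assumes X: "X \<in> carrier_mat m n" and mn: "m \<le> n" and svd: "is_svd X s U V"
  shows "X * transpose_mat X = U * mat m m (\<lambda>(i,j). if i = j then s i ^ 2 else 0) * transpose_mat U"
proof -
  define R where "R = rect_diag m n s"
  have Uc: "U \<in> carrier_mat m m" and Vc: "V \<in> carrier_mat n n"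
    and VVt: "V * transpose_mat V = 1\<^sub>m n" and Xe: "X = U * R * transpose_mat V"
    using svd X unfolding is_svd_def orthogonal_mat_def R_def by auto
  have Rc: "R \<in> carrier_mat m n" unfolding R_def by auto
  have Utc: "transpose_mat U \<in> carrier_mat m m" and Rtc: "transpose_mat R \<in> carrier_mat n m"
    and Vtc: "transpose_mat V \<in> carrier_mat n n" and URc: "U * R \<in> carrier_mat m n"
    and RUc: "transpose_mat R * transpose_mat U \<in> carrier_mat n m"
    using Uc Vc Rc by auto
  have VtV: "transpose_mat V * V = 1\<^sub>m n"
    by (rule mat_mult_left_right_inverse[OF Vc Vtc VVt])
  have Xt: "transpose_mat X = V * (transpose_mat R * transpose_mat U)"
    unfolding Xe using transpose_mult[OF URc Vtc] transpose_mult[OF Uc Rc] Vc by simp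
  have "X * transpose_mat X = (U * R) * (transpose_mat V * (V * (transpose_mat R * transpose_mat U)))"
    unfolding Xt unfolding Xe by (intro assoc_mult_mat[OF URc Vtc]) (use Vc RUc in auto)
  also have "transpose_mat V * (V * (transpose_mat R * transpose_mat U)) = transpose_mat R * transpose_mat U"
    using assoc_mult_mat[OF Vtc Vc RUc, symmetric] VtV left_mult_one_mat[OF RUc] by simp
  also have "(U * R) * (transpose_mat R * transpose_mat U) = U * (R * transpose_mat R) * transpose_mat U"
    using Rc Rtc by (simp add: assoc_mult_mat[OF Uc Rc RUc] assoc_mult_mat[OF Rc Rtc Utc]
        assoc_mult_mat[OF Uc _ Utc, of "R * transpose_mat R"])
  finally show ?thesis unfolding R_def rect_diag_mult_transpose[OF mn] .
qed

lemma char_poly_mult_transpose: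
  assumes X: "X \<in> carrier_mat m n" and mn: "m \<le> n" and svd: "is_svd X s U V"
  shows "char_poly (X * transpose_mat X) = (\<Prod>i\<leftarrow>[0..<m]. [:- (s i ^ 2), 1:])"
proof -
  define S where "S = mat m m (\<lambda>(i,j). if i = j then s i ^ 2 else (0::real))"
  have Uc: "U \<in> carrier_mat m m" and UUt: "U * transpose_mat U = 1\<^sub>m m"
    using svd X unfolding is_svd_def orthogonal_mat_def by auto
  have UtU: "transpose_mat U * U = 1\<^sub>m m"
    by (rule mat_mult_left_right_inverse[OF Uc _ UUt]) (use Uc in simp)
  have Sc: "S \<in> carrier_mat m m" unfolding S_def by auto
  have "similar_mat (X * transpose_mat X) S"
    using svd_mult_transpose[OF X mn svd] Uc Sc UUt UtU X unfolding S_def[symmetric]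
    by (intro similar_matI[of _ _ U "transpose_mat U" m]) auto
  then have "char_poly (X * transpose_mat X) = char_poly S" by (rule char_poly_similar)
  also have "\<dots> = (\<Prod>a\<leftarrow>diag_mat S. [:- a, 1:])"
    by (rule char_poly_upper_triangular[OF Sc]) (auto simp: upper_triangular_def S_def)
  also have "diag_mat S = map (\<lambda>i. s i ^ 2) [0..<m]" by (auto simp: diag_mat_def S_def)
  finally show ?thesis by (simp add: comp_def)
qed

lemma proots_prod_list_linear:
  fixes xs :: "'a::idom list"
  shows "proots (\<Prod>a\<leftarrow>xs. [:-a, 1:]) = mset xs"
proof (induction xs)
  case (Cons a xs)
  have "proots [:-a, 1:] = {#a#}" using proots_linear_factor[of "-a"] by simp
  then show ?case
    using Cons by (simp only: list.map prod_list.Cons, subst proots_mult) (auto simp: prod_list_zero_iff)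
qed simp

lemma sorted_rev_squares_sv_seq:
  assumes "sv_seq m u"
  shows "sorted (rev (map (\<lambda>i. u i ^ 2) [0..<m]))"
proof -
  have "u (m - Suc i) ^ 2 \<le> u (m - Suc j) ^ 2" if "i \<le> j" "j < m" for i j
    using assms that unfolding sv_seq_def by (simp add: power_mono)
  then show ?thesis by (auto simp: sorted_iff_nth_mono rev_nth)
qed

lemma sv_seq_unique:
  assumes X: "X \<in> carrier_mat m n" and mn: "m \<le> n"
    and s: "is_svd X s U V" "sv_seq m s" and t: "is_svd X t U' V'" "sv_seq m t"
  shows "s = t"
proof
  define A where "A = map (\<lambda>i. s i ^ 2) [0..<m]"
  define B where "B = map (\<lambda>i. t i ^ 2) [0..<m]"
  have "mset A = mset B"
    using char_poly_mult_transpose[OF X mn s(1)] char_poly_mult_transpose[OF X mn t(1)]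
      proots_prod_list_linear[of A] proots_prod_list_linear[of B]
    unfolding A_def B_def by (simp add: comp_def)
  then have "sort (rev B) = rev A"
    using sorted_rev_squares_sv_seq[OF s(2)] unfolding A_def B_def by (intro properties_for_sort) simp_all
  moreover have "sort (rev B) = rev B"
    using sorted_rev_squares_sv_seq[OF t(2)] unfolding B_def by (rule sorted_sort_id)
  ultimately have AB: "A = B" by simp
  fix i show "s i = t i"
  proof (cases "i < m")
    case True
    then have "s i ^ 2 = t i ^ 2" using arg_cong[OF AB, of "\<lambda>xs. xs ! i"] by (simp add: A_def B_def)
    moreover have "0 \<le> s i" "0 \<le> t i" using s(2) t(2) True unfolding sv_seq_def by auto
    ultimately show ?thesis by simp
  qed (use s(2) t(2) in \<open>simp add: sv_seq_def\<close>)
qed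

lemma sigma_eqI:
  assumes X: "X \<in> carrier_mat m n" and mn: "m \<le> n" and svd: "is_svd X s U V" "sv_seq m s"
  shows "sigma X = s"
proof -
  have rows: "dim_row X = m" using X by auto
  show ?thesis
    unfolding sigma_def rows by (rule the_equality) (use svd sv_seq_unique[OF X mn] in blast)+
qed

lemma sigma_sorted_abs:
  assumes X: "X \<in> carrier_mat m n" and mn: "m \<le> n" and svd: "is_svd X s U V"
  shows "sv_seq m (sigma X)" "mset (map (sigma X) [0..<m]) = mset (map (\<lambda>i. \<bar>s i\<bar>) [0..<m])"
proof -
  obtain s' U' V' where s': "sv_seq m s'" "is_svd X s' U' V'"
    "mset (map s' [0..<m]) = mset (map (\<lambda>i. \<bar>s i\<bar>) [0..<m])"
    using is_svd_sorted_exists[OF X mn svd] by blast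
  moreover have "sigma X = s'" using sigma_eqI[OF X mn s'(2,1)] .
  ultimately show "sv_seq m (sigma X)" "mset (map (sigma X) [0..<m]) = mset (map (\<lambda>i. \<bar>s i\<bar>) [0..<m])"
    by auto
qed

lemma sigma_nonneg:
  assumes X: "X \<in> carrier_mat m n" and mn: "m \<le> n" and svd: "is_svd X s U V"
  shows "0 \<le> sigma X i"
  using sigma_sorted_abs(1)[OF X mn svd] unfolding sv_seq_def by (cases "i < m") auto

lemma nuc_norm_svd:
  assumes X: "X \<in> carrier_mat m n" and mn: "m \<le> n" and svd: "is_svd X s U V"
  shows "nuc_norm X = (\<Sum>i<m. \<bar>s i\<bar>)"
proof -
  have "nuc_norm X = sum_list (map (sigma X) [0..<m])"
    using X by (simp add: nuc_norm_def sum_list_distinct_conv_sum_set atLeast0LessThan)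
  also have "\<dots> = sum_list (map (\<lambda>i. \<bar>s i\<bar>) [0..<m])"
    using sigma_sorted_abs(2)[OF X mn svd] by (metis sum_mset_sum_list)
  also have "\<dots> = (\<Sum>i<m. \<bar>s i\<bar>)" by (simp add: sum_list_distinct_conv_sum_set atLeast0LessThan)
  finally show ?thesis .
qed

lemma trunc_nuc_nonneg:
  assumes X: "X \<in> carrier_mat m n" and mn: "m \<le> n" and svd: "is_svd X s U V"
  shows "0 \<le> trunc_nuc K X"
  unfolding trunc_nuc_def by (rule sum_nonneg) (rule sigma_nonneg[OF X mn svd])

lemma rank_svd_sum_le:
  assumes K: "K \<le> m" and zero: "\<And>k. K \<le> k \<Longrightarrow> k < m \<Longrightarrow> s k = 0"
  shows "vec_space.rank m (svd_sum m n U s V) \<le> K"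
proof -
  define A where "A N = mat m n (\<lambda>(i,j). \<Sum>k<N. U$$(i,k) * s k * V$$(j,k))" for N
  have "vec_space.rank m (A N) \<le> N" for N
  proof (induction N)
    case 0
    have "A 0 = 0\<^sub>m m n" unfolding A_def by (rule eq_matI) auto
    then show ?case using vec_space.rank_0I[of m n] by simp
  next
    case (Suc N)
    define B where "B = mat m n (\<lambda>(i,j). U$$(i,N) * s N * V$$(j,N))"
    have "A (Suc N) = A N + B" unfolding A_def B_def by (rule eq_matI) auto
    moreover have "vec_space.rank m B \<le> 1"
      by (rule vec_space.rank_le_1_product_entries[of B m n "\<lambda>r. U$$(r,N) * s N" "\<lambda>c. V$$(c,N)"])
        (auto simp: B_def)
    moreover have "vec_space.rank m (A N + B) \<le> vec_space.rank m (A N) + vec_space.rank m B"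
      by (rule vec_space.rank_subadditive) (auto simp: A_def B_def)
    ultimately show ?case using Suc.IH by simp
  qed
  moreover have "svd_sum m n U s V = A K"
  proof -
    have "(\<Sum>k<m. U$$(i,k) * s k * V$$(j,k)) = (\<Sum>k<K. U$$(i,k) * s k * V$$(j,k))" for i j
      using K zero by (intro sum.mono_neutral_right) auto
    then show ?thesis unfolding svd_sum_def A_def by simp
  qed
  ultimately show ?thesis by simp
qed

lemma rank_le_if_trunc_nuc_eq_0:
  assumes X: "X \<in> carrier_mat m n" and mn: "m \<le> n" and svd: "is_svd X s U V"
    and K: "K \<le> m" and T: "trunc_nuc K X = 0"
  shows "vec_space.rank m X \<le> K"
proof -
  obtain s' U' V' where s': "sv_seq m s'" "is_svd X s' U' V'"
    using is_svd_sorted_exists[OF X mn svd] by blast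
  have sigma: "sigma X = s'" using sigma_eqI[OF X mn s'(2,1)] .
  have "s' k = 0" if "K \<le> k" "k < m" for k
    using T sum_nonneg_eq_0_iff[of "{K..<m}" "sigma X"] sigma_nonneg[OF X mn svd] X that
    unfolding trunc_nuc_def sigma by auto
  then have "vec_space.rank m (svd_sum m n U' s' V') \<le> K" by (rule rank_svd_sum_le[OF K])
  then show ?thesis using s'(2) is_svd_iff[OF X mn] by simp
qed

definition sv_tail :: "nat \<Rightarrow> (nat \<Rightarrow> real) \<Rightarrow> nat \<Rightarrow> real" where
  "sv_tail K s = (\<lambda>i. if K \<le> i then s i else 0)"

lemma sum_sv_tail: "(\<Sum>i<m. sv_tail K s i) = (\<Sum>i\<in>{K..<m}. s i)"
  unfolding sv_tail_def by (rule sum.mono_neutral_cong_right) auto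

lemma trunc_nuc_shrink_tail:
  assumes X: "X \<in> carrier_mat m n" and mn: "m \<le> n" and svd: "is_svd X (sigma X) U V"
    and c: "0 \<le> c" "c \<le> 1"
  shows "trunc_nuc K (X + c \<cdot>\<^sub>m (- (U * rect_diag m n (sv_tail K (sigma X)) * transpose_mat V)))
         = (1 - c) * trunc_nuc K X"
proof -
  define \<sigma> where "\<sigma> = sigma X"
  have U: "orthogonal_mat m U" and V: "orthogonal_mat n V" and Xe: "X = svd_sum m n U \<sigma> V"
    using svd is_svd_iff[OF X mn] unfolding \<sigma>_def by auto
  have Uc: "U \<in> carrier_mat m m" and Vc: "V \<in> carrier_mat n n"
    using U V unfolding orthogonal_mat_def by auto
  define \<tau> where "\<tau> i = (if K \<le> i then (1 - c) * \<sigma> i else \<sigma> i)" for i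
  have Y: "X + c \<cdot>\<^sub>m (- (U * rect_diag m n (sv_tail K \<sigma>) * transpose_mat V)) = svd_sum m n U \<tau> V"
    unfolding mult_rect_diag_transpose_eq_svd_sum[OF Uc Vc mn] svd_sum_uminus svd_sum_smult
      Xe svd_sum_add
    by (rule svd_sum_cong) (simp add: \<tau>_def sv_tail_def algebra_simps)
  have sv: "sv_seq m \<sigma>" using sigma_sorted_abs(1)[OF X mn svd] unfolding \<sigma>_def .
  have "sv_seq m \<tau>"
    unfolding sv_seq_def
  proof (intro conjI allI impI)
    fix i j assume ij: "i \<le> j \<and> j < m"
    then have "\<sigma> j \<le> \<sigma> i" "0 \<le> \<sigma> j" using sv unfolding sv_seq_def by auto
    then show "\<tau> j \<le> \<tau> i"
      using ij c mult_left_le_one_le[of "\<sigma> j" "1 - c"] mult_left_mono[of "\<sigma> j" "\<sigma> i" "1 - c"]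
      unfolding \<tau>_def by auto
  qed (use sv c in \<open>auto simp: sv_seq_def \<tau>_def\<close>)
  then have "sigma (svd_sum m n U \<tau> V) = \<tau>"
    using U V is_svd_iff[of _ m n] mn by (intro sigma_eqI[of _ m n]) auto
  then have "trunc_nuc K (svd_sum m n U \<tau> V) = (\<Sum>i\<in>{K..<m}. (1 - c) * \<sigma> i)"
    unfolding trunc_nuc_def by (simp add: \<tau>_def)
  then show ?thesis
    using X by (simp add: Y[unfolded \<sigma>_def] trunc_nuc_def sum_distrib_left \<sigma>_def)
qed

lemma trunc_nuc_along_tail_direction:
  assumes X: "X \<in> carrier_mat m n" and mn: "m \<le> n" and svd: "is_svd X (sigma X) U V"
    and t: "0 \<le> t" "t \<le> trunc_nuc K X"
  shows "trunc_nuc K (X + t \<cdot>\<^sub>m ((1 / trunc_nuc K X) \<cdot>\<^sub>m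
           (- (U * rect_diag m n (sv_tail K (sigma X)) * transpose_mat V)))) = trunc_nuc K X - t"
proof -
  let ?T = "trunc_nuc K X" and ?E = "- (U * rect_diag m n (sv_tail K (sigma X)) * transpose_mat V)"
  have "t \<cdot>\<^sub>m ((1 / ?T) \<cdot>\<^sub>m ?E) = (t / ?T) \<cdot>\<^sub>m ?E" by (rule eq_matI) auto
  moreover have "0 \<le> t / ?T" "t / ?T \<le> 1" using t by (auto simp: divide_le_eq_1)
  ultimately have "trunc_nuc K (X + t \<cdot>\<^sub>m ((1 / ?T) \<cdot>\<^sub>m ?E)) = (1 - t / ?T) * ?T"
    using trunc_nuc_shrink_tail[OF X mn svd] by simp
  also have "\<dots> = ?T - t" using t by (cases "?T = 0") (auto simp: field_simps)
  finally show ?thesis .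
qed

lemma nuc_norm_smult_tail_direction:
  assumes X: "X \<in> carrier_mat m n" and mn: "m \<le> n" and svd: "is_svd X (sigma X) U V" and c: "0 \<le> c"
  shows "nuc_norm (c \<cdot>\<^sub>m (- (U * rect_diag m n (sv_tail K (sigma X)) * transpose_mat V))) = c * trunc_nuc K X"
proof -
  have U: "orthogonal_mat m U" and V: "orthogonal_mat n V"
    using svd is_svd_iff[OF X mn] by auto
  then have Uc: "U \<in> carrier_mat m m" and Vc: "V \<in> carrier_mat n n"
    unfolding orthogonal_mat_def by auto
  define \<tau> where "\<tau> i = c * - sv_tail K (sigma X) i" for i
  have "c \<cdot>\<^sub>m (- (U * rect_diag m n (sv_tail K (sigma X)) * transpose_mat V)) = svd_sum m n U \<tau> V"
    unfolding mult_rect_diag_transpose_eq_svd_sum[OF Uc Vc mn] svd_sum_uminus svd_sum_smult \<tau>_def ..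
  then have "nuc_norm (c \<cdot>\<^sub>m (- (U * rect_diag m n (sv_tail K (sigma X)) * transpose_mat V))) = (\<Sum>i<m. \<bar>\<tau> i\<bar>)"
    using U V is_svd_iff[of _ m n] mn by (intro nuc_norm_svd) auto
  also have "\<dots> = c * (\<Sum>i<m. sv_tail K (sigma X) i)"
    using c sigma_nonneg[OF X mn svd]
    by (simp add: sum_distrib_left \<tau>_def sv_tail_def abs_mult)
  also have "\<dots> = c * trunc_nuc K X" using X by (simp add: trunc_nuc_def sum_sv_tail)
  finally show ?thesis .
qed

lemma feas_cone_smult:
  assumes D: "D \<in> feas_cone m n C X" and c: "0 < c"
  shows "c \<cdot>\<^sub>m D \<in> feas_cone m n C X"
proof -
  obtain e where e: "e > 0" "\<And>t. 0 < t \<Longrightarrow> t < e \<Longrightarrow> X + t \<cdot>\<^sub>m D \<in> C" and Dc: "D \<in> carrier_mat m n"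
    using D unfolding feas_cone_def by blast
  have "t \<cdot>\<^sub>m (c \<cdot>\<^sub>m D) = (t * c) \<cdot>\<^sub>m D" for t by (rule eq_matI) auto
  then have "X + t \<cdot>\<^sub>m (c \<cdot>\<^sub>m D) \<in> C" if "0 < t" "t < e / c" for t
    using e(2)[of "t * c"] that c by (simp add: field_simps)
  then show ?thesis unfolding feas_cone_def using Dc e(1) c by (auto intro!: exI[of _ "e / c"])
qed

lemma has_dir_deriv_unique:
  "has_dir_deriv h X D d \<Longrightarrow> has_dir_deriv h X D d' \<Longrightarrow> d = d'"
  unfolding has_dir_deriv_def by (rule tendsto_unique[OF trivial_limit_at_right_real])

lemma has_dir_deriv_add_linear:
  assumes f: "has_dir_deriv f X D d"
    and g: "\<forall>\<^sub>F t in at_right 0. g (X + t \<cdot>\<^sub>m D) = g X - r * t"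
  shows "has_dir_deriv (\<lambda>Y. f Y + \<gamma> * g Y) X D (d - \<gamma> * r)"
proof -
  have "\<forall>\<^sub>F t in at_right 0. (f (X + t \<cdot>\<^sub>m D) - f X) / t - \<gamma> * r
      = (f (X + t \<cdot>\<^sub>m D) + \<gamma> * g (X + t \<cdot>\<^sub>m D) - (f X + \<gamma> * g X)) / t"
    using g eventually_at_right_less[of 0]
  proof eventually_elim
    case (elim t)
    show ?case by (subst elim(1)) (use elim(2) in \<open>simp add: field_simps\<close>)
  qed
  moreover have "((\<lambda>t. (f (X + t \<cdot>\<^sub>m D) - f X) / t - \<gamma> * r) \<longlongrightarrow> d - \<gamma> * r) (at_right 0)"
    using f unfolding has_dir_deriv_def by (intro tendsto_intros)
  ultimately show ?thesis unfolding has_dir_deriv_def by (rule Lim_transform_eventually[rotated])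
qed

theorem mainTheorem14:
  fixes m n K :: nat and \<gamma> \<Gamma> :: real and f :: "real mat \<Rightarrow> real"
    and C :: "real mat set" and Xs :: "real mat"
  assumes mn: "m \<le> n"
    and K: "K < m"
    and gam: "\<gamma> > 0"
    and C_sub: "C \<subseteq> carrier_mat m n"
    and dir_diff: "\<forall>X\<in>C. \<forall>D\<in>feas_cone m n C X. \<exists>d. has_dir_deriv f X D d"
    and Xs_C: "Xs \<in> C"
    and dstat: "\<forall>D\<in>feas_cone m n C Xs.
                 \<exists>d. has_dir_deriv (\<lambda>X. f X + \<gamma> * trunc_nuc K X) Xs D d \<and> d \<ge> 0"
    and C1: "\<forall>X\<in>C. \<exists>U V. is_svd X (sigma X) U V \<and>
               - (U * rect_diag m n (\<lambda>i. if K \<le> i then sigma X i else 0) * transpose_mat V)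
                 \<in> feas_cone m n C X"
    and C2: "\<forall>D\<in>feas_cone m n C Xs. nuc_norm D = 1 \<longrightarrow>
               (\<forall>d. has_dir_deriv f Xs D d \<longrightarrow> d \<le> \<Gamma>)"
    and gG: "\<gamma> > \<Gamma>"
  shows "trunc_nuc K Xs = 0 \<and> vec_space.rank m Xs \<le> K"
proof -
  have Xs: "Xs \<in> carrier_mat m n" using C_sub Xs_C by auto
  obtain U V where svd: "is_svd Xs (sigma Xs) U V"
    and E: "- (U * rect_diag m n (sv_tail K (sigma Xs)) * transpose_mat V) \<in> feas_cone m n C Xs"
    using C1 Xs_C unfolding sv_tail_def by blast
  define T where "T = trunc_nuc K Xs"
  define D where "D = (1 / T) \<cdot>\<^sub>m (- (U * rect_diag m n (sv_tail K (sigma Xs)) * transpose_mat V))"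
  have "T = 0"
  proof (rule ccontr)
    assume "T \<noteq> 0"
    then have T: "T > 0" using trunc_nuc_nonneg[OF Xs mn svd, of K] unfolding T_def by linarith
    have D_feas: "D \<in> feas_cone m n C Xs" unfolding D_def using feas_cone_smult[OF E] T by simp
    have "nuc_norm D = 1" using nuc_norm_smult_tail_direction[OF Xs mn svd, of "1 / T"] T
      unfolding D_def T_def by simp
    moreover obtain df where df: "has_dir_deriv f Xs D df" using dir_diff Xs_C D_feas by blast
    ultimately have "df \<le> \<Gamma>" using C2 D_feas by blast
    have "\<forall>\<^sub>F t in at_right 0. trunc_nuc K (Xs + t \<cdot>\<^sub>m D) = T - 1 * t"
      using eventually_at_right_less[of 0] eventually_at_right_real[OF T]
      by eventually_elim (use trunc_nuc_along_tail_direction[OF Xs mn svd] in \<open>simp add: D_def T_def\<close>)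
    from has_dir_deriv_add_linear[OF df this[unfolded T_def]]
    have "has_dir_deriv (\<lambda>X. f X + \<gamma> * trunc_nuc K X) Xs D (df - \<gamma> * 1)" .
    moreover obtain d where "has_dir_deriv (\<lambda>X. f X + \<gamma> * trunc_nuc K X) Xs D d" "d \<ge> 0"
      using dstat D_feas by blast
    ultimately show False using has_dir_deriv_unique \<open>df \<le> \<Gamma>\<close> gG by fastforce
  qed
  then show ?thesis using rank_le_if_trunc_nuc_eq_0[OF Xs mn svd] K unfolding T_def by simp
qed

end
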